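(* Let $R$ be a $\mathbb{C}$-algebra which is a noetherian UFD, let $r,s\in R$ be elements such that the ideal $(r,s)$ has height $2$ and $r,s$ share no common non-unit factor, and let $A_{r,s}:=R[U,V]/(rU-sV-1)$ with $u,v$ the residue classes of $U,V$. Assume: $A_{r,s}$ is a UFD; $A_{r,s}^*=R^*$; $R$ is rigid and $ML(A_{r,s})=R$. Let $E$ be the $R$-derivation of $A_{r,s}$ with $E(u)=s$, $E(v)=r$. Then for every $\mathbb{C}$-algebra automorphism $\varphi$ of $A_{r,s}$ one has $\varphi^{-1}E\varphi=\lambda E$ for some $\lambda\in R^*$.
   Context: A derivation $D$ of a ring $B$ is locally nilpotent if for every $b\in B$ there is $n$ with $D^n(b)=0$; $\operatorname{LND}(B)$ denotes the set of locally nilpotent $\mathbb{C}$-derivations of the $\mathbb{C}$-algebra $B$. The Makar-Limanov invariant $ML(B)$ is the intersection of the kernels of all $D\in\operatorname{LND}(B)$. $B$ is rigid if $\operatorname{LND}(B)=\{0\}$. $B^*$ denotes the unit group. *)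

theory Defs
  imports Complex_Main "HOL-Computational_Algebra.Polynomial" "HOL-Computational_Algebra.Factorial_Ring"
    "HOL-Library.Extended_Nat"
begin

definition rhom :: "('a::comm_ring_1 \<Rightarrow> 'b::comm_ring_1) \<Rightarrow> bool" where
  "rhom f \<longleftrightarrow> f 1 = 1 \<and> (\<forall>x y. f (x + y) = f x + f y) \<and> (\<forall>x y. f (x * y) = f x * f y)"

text \<open>A C-algebra structure on a commutative ring B is a ring homomorphism
  k : complex -> B.\<close>

definition is_ideal :: "'a::comm_ring_1 set \<Rightarrow> bool" where
  "is_ideal I \<longleftrightarrow> 0 \<in> I \<and> (\<forall>x\<in>I. \<forall>y\<in>I. x + y \<in> I) \<and> (\<forall>a. \<forall>x\<in>I. a * x \<in> I)"

definition ideal_of :: "'a::comm_ring_1 set \<Rightarrow> 'a set" where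
  "ideal_of S = \<Inter> {I. is_ideal I \<and> S \<subseteq> I}"

definition noetherian :: "'a::comm_ring_1 itself \<Rightarrow> bool" where
  "noetherian _ \<longleftrightarrow> (\<forall>I::'a set. is_ideal I \<longrightarrow> (\<exists>F. finite F \<and> I = ideal_of F))"

definition prime_ideal :: "'a::comm_ring_1 set \<Rightarrow> bool" where
  "prime_ideal P \<longleftrightarrow> is_ideal P \<and> P \<noteq> UNIV \<and> (\<forall>a b. a * b \<in> P \<longrightarrow> a \<in> P \<or> b \<in> P)"

definition prime_height :: "'a::comm_ring_1 set \<Rightarrow> enat" where
  "prime_height P = Sup {enat n | n. \<exists>c::nat \<Rightarrow> 'a set.
      (\<forall>i\<le>n. prime_ideal (c i)) \<and> (\<forall>i<n. c i \<subset> c (Suc i)) \<and> c n = P}"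

definition ideal_height :: "'a::comm_ring_1 set \<Rightarrow> enat" where
  "ideal_height I = Inf {prime_height P | P. prime_ideal P \<and> I \<subseteq> P}"

text \<open>Irreducible element (same as the library notion, which however needs a stronger sort).\<close>
definition irred :: "'a::idom \<Rightarrow> bool" where
  "irred p \<longleftrightarrow> p \<noteq> 0 \<and> \<not> (p dvd 1) \<and> (\<forall>a b. p = a * b \<longrightarrow> (a dvd 1) \<or> (b dvd 1))"

definition ufd :: "'a::idom itself \<Rightarrow> bool" where
  "ufd _ \<longleftrightarrow>
     (\<forall>x::'a. x \<noteq> 0 \<and> \<not> (x dvd 1) \<longrightarrow>
        (\<exists>xs. xs \<noteq> [] \<and> (\<forall>p\<in>set xs. irred p) \<and> x = prod_list xs)) \<and>
     (\<forall>xs ys :: 'a list. (\<forall>p\<in>set xs. irred p) \<and> (\<forall>p\<in>set ys. irred p)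
        \<and> prod_list xs = prod_list ys \<longrightarrow>
        (\<exists>f. bij_betw f {..<length xs} {..<length ys} \<and>
             (\<forall>i<length xs. xs ! i dvd ys ! (f i) \<and> ys ! (f i) dvd xs ! i)))"

definition is_Cder :: "(complex \<Rightarrow> 'b::comm_ring_1) \<Rightarrow> ('b \<Rightarrow> 'b) \<Rightarrow> bool" where
  "is_Cder k D \<longleftrightarrow> (\<forall>x y. D (x + y) = D x + D y) \<and> (\<forall>c x. D (k c * x) = k c * D x)
     \<and> (\<forall>x y. D (x * y) = x * D y + y * D x)"

definition LND :: "(complex \<Rightarrow> 'b::comm_ring_1) \<Rightarrow> ('b \<Rightarrow> 'b) set" where
  "LND k = {D. is_Cder k D \<and> (\<forall>b. \<exists>n. (D ^^ n) b = 0)}"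

definition makar_limanov :: "(complex \<Rightarrow> 'b::comm_ring_1) \<Rightarrow> 'b set" where
  "makar_limanov k = (\<Inter>D\<in>LND k. {b. D b = 0})"

definition rigid :: "(complex \<Rightarrow> 'b::comm_ring_1) \<Rightarrow> bool" where
  "rigid k \<longleftrightarrow> LND k = {\<lambda>_. 0}"

text \<open>R-derivation of B where j : R -> B is the R-algebra structure.\<close>
definition is_Rder :: "('a::comm_ring_1 \<Rightarrow> 'b::comm_ring_1) \<Rightarrow> ('b \<Rightarrow> 'b) \<Rightarrow> bool" where
  "is_Rder j D \<longleftrightarrow> (\<forall>x y. D (x + y) = D x + D y) \<and> (\<forall>a x. D (j a * x) = j a * D x)
     \<and> (\<forall>x y. D (x * y) = x * D y + y * D x)"

definition C_alg_aut :: "(complex \<Rightarrow> 'b::comm_ring_1) \<Rightarrow> ('b \<Rightarrow> 'b) \<Rightarrow> bool" where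
  "C_alg_aut k \<phi> \<longleftrightarrow> bij \<phi> \<and> rhom \<phi> \<and> (\<forall>c. \<phi> (k c) = k c)"

section \<open>The ring R[U,V] (as 'a poly poly, outer variable U) and the algebra A_{r,s}\<close>

definition varU :: "'a::comm_ring_1 poly poly" where "varU = [:0, 1:]"
definition varV :: "'a::comm_ring_1 poly poly" where "varV = [:[:0, 1:]:]"
definition constUV :: "'a::comm_ring_1 \<Rightarrow> 'a poly poly" where "constUV a = [:[:a:]:]"

text \<open>Evaluation R[U,V] -> B given by j on coefficients, U |-> u, V |-> v.\<close>
definition eval2 :: "('a::comm_ring_1 \<Rightarrow> 'b::comm_ring_1) \<Rightarrow> 'b \<Rightarrow> 'b \<Rightarrow> 'a poly poly \<Rightarrow> 'b" where
  "eval2 j u v p = poly (map_poly (\<lambda>q. poly (map_poly j q) v) p) u"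

text \<open>(B, j, u, v) is a presentation of A_{r,s} = R[U,V]/(rU - sV - 1), u, v the residue classes
  of U, V: the evaluation map is a surjective ring homomorphism with kernel the principal
  ideal (rU - sV - 1).\<close>
definition presents_Ars :: "'a::comm_ring_1 \<Rightarrow> 'a \<Rightarrow> ('a \<Rightarrow> 'b::comm_ring_1) \<Rightarrow> 'b \<Rightarrow> 'b \<Rightarrow> bool" where
  "presents_Ars r s j u v \<longleftrightarrow> rhom j \<and> surj (eval2 j u v) \<and>
     (\<forall>f. eval2 j u v f = 0 \<longleftrightarrow>
        (constUV r * varU - constUV s * varV - 1) dvd f)"

end

theory Submission
  imports Defs
begin

text \<open>The Makar-Limanov invariant is preserved by every \<open>\<complex>\<close>-algebra automorphism \<open>\<phi>\<close>, because
  conjugation by \<open>\<phi>\<close> permutes the locally nilpotent derivations; since \<open>ML(A\<^sub>r\<^sub>,\<^sub>s) = R\<close>, \<open>\<phi>\<close> maps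
  \<open>R\<close> into itself and the conjugate \<open>D = \<phi>\<^sup>-\<^sup>1 E \<phi>\<close> is again an \<open>R\<close>-derivation. Differentiating \<open>ru - sv = 1\<close> gives
  \<open>r D(u) = s D(v)\<close>, and multiplying by \<open>ru - sv\<close> shows \<open>D = h E\<close> with \<open>h = u D(v) - v D(u)\<close>,
  because \<open>A\<^sub>r\<^sub>,\<^sub>s\<close> is generated by \<open>u, v\<close> over \<open>R\<close>. Doing the same for \<open>\<phi>\<^sup>-\<^sup>1\<close> gives
  \<open>\<phi> E \<phi>\<^sup>-\<^sup>1 = h' E\<close>, whence \<open>\<phi>(h) h' = 1\<close>; so \<open>h\<close> is a unit of \<open>A\<^sub>r\<^sub>,\<^sub>s\<close>, i.e. lies in \<open>R\<^sup>*\<close>.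
  Beyond the presentation of \<open>A\<^sub>r\<^sub>,\<^sub>s\<close>, \<open>ML(A\<^sub>r\<^sub>,\<^sub>s) = R\<close>, \<open>A\<^sub>r\<^sub>,\<^sub>s\<^sup>* = R\<^sup>*\<close> and the
  definition of \<open>E\<close>, none of the hypotheses is used.\<close>

lemma rhom_0: "rhom f \<Longrightarrow> f 0 = 0"
  unfolding rhom_def by (metis add_cancel_right_right add_0)

lemma rhom_minus: "rhom f \<Longrightarrow> f (- x) = - f x"
  using rhom_0[of f] unfolding rhom_def by (metis add.right_inverse add_eq_0_iff2)

lemma rhom_unit: "rhom f \<Longrightarrow> x dvd 1 \<Longrightarrow> f x dvd 1"
  unfolding rhom_def by (metis dvd_def)

lemma rhom_inv:
  assumes "bij f" "rhom f"
  shows "rhom (inv f)"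
proof -
  have f_inv: "f (inv f y) = y" for y using assms(1) by (simp add: bij_is_surj surj_f_inv_f)
  have inv_f: "inv f (f x) = x" for x using assms(1) by (simp add: bij_is_inj)
  have "inv f 1 = 1" using assms(2) inv_f unfolding rhom_def by metis
  moreover have "inv f (x + y) = inv f x + inv f y" for x y
  proof -
    have "x + y = f (inv f x + inv f y)" using assms(2) f_inv unfolding rhom_def by simp
    then show ?thesis using inv_f by simp
  qed
  moreover have "inv f (x * y) = inv f x * inv f y" for x y
  proof -
    have "x * y = f (inv f x * inv f y)" using assms(2) f_inv unfolding rhom_def by simp
    then show ?thesis using inv_f by simp
  qed
  ultimately show ?thesis unfolding rhom_def by blast
qed

lemma C_alg_aut_inv: "C_alg_aut k \<phi> \<Longrightarrow> C_alg_aut k (inv \<phi>)"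
  unfolding C_alg_aut_def by (metis bij_imp_bij_inv bij_is_inj inv_f_f rhom_inv)

lemma leibniz_1:
  fixes D :: "'a::comm_ring_1 \<Rightarrow> 'a"
  assumes "\<And>x y. D (x * y) = x * D y + y * D x"
  shows "D 1 = 0"
  using assms[of 1 1] by simp

lemma is_Cder_const: "is_Cder k D \<Longrightarrow> D (k c) = 0"
  unfolding is_Cder_def using leibniz_1[of D] by (metis mult.right_neutral mult_zero_right)

lemma is_Rder_const: "is_Rder j D \<Longrightarrow> D (j a) = 0"
  unfolding is_Rder_def using leibniz_1[of D] by (metis mult.right_neutral mult_zero_right)

lemma funpow_conj:
  assumes "bij \<psi>"
  shows "(inv \<psi> \<circ> D \<circ> \<psi>) ^^ n = inv \<psi> \<circ> D ^^ n \<circ> \<psi>"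
proof (induction n)
  case 0
  show ?case using assms by (simp add: bij_is_inj fun_eq_iff)
next
  case (Suc n)
  have "\<psi> (inv \<psi> y) = y" for y using assms by (simp add: bij_is_surj surj_f_inv_f)
  then show ?case using Suc by (simp add: funpow_Suc_right fun_eq_iff del: funpow.simps)
qed

lemma conj_additive_leibniz:
  assumes "bij \<psi>" "rhom \<psi>"
    and add: "\<And>x y. D (x + y) = D x + D y"
    and leibniz: "\<And>x y. D (x * y) = x * D y + y * D x"
  shows "(inv \<psi> \<circ> D \<circ> \<psi>) (x + y) = (inv \<psi> \<circ> D \<circ> \<psi>) x + (inv \<psi> \<circ> D \<circ> \<psi>) y"
    and "(inv \<psi> \<circ> D \<circ> \<psi>) (x * y) = x * (inv \<psi> \<circ> D \<circ> \<psi>) y + y * (inv \<psi> \<circ> D \<circ> \<psi>) x"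
proof -
  have inv_hom: "rhom (inv \<psi>)" using rhom_inv[OF assms(1,2)] .
  have inv_f: "inv \<psi> (\<psi> x) = x" for x using assms(1) by (simp add: bij_is_inj)
  show "(inv \<psi> \<circ> D \<circ> \<psi>) (x + y) = (inv \<psi> \<circ> D \<circ> \<psi>) x + (inv \<psi> \<circ> D \<circ> \<psi>) y"
    using assms(2) inv_hom add by (simp add: rhom_def)
  show "(inv \<psi> \<circ> D \<circ> \<psi>) (x * y) = x * (inv \<psi> \<circ> D \<circ> \<psi>) y + y * (inv \<psi> \<circ> D \<circ> \<psi>) x"
    using assms(2) inv_hom leibniz inv_f by (simp add: rhom_def)
qed

lemma LND_conj:
  assumes aut: "C_alg_aut k \<psi>" and D: "D \<in> LND k"
  shows "inv \<psi> \<circ> D \<circ> \<psi> \<in> LND k"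
proof -
  have bij: "bij \<psi>" and hom: "rhom \<psi>" and fix_k: "\<And>c. \<psi> (k c) = k c"
    using aut by (auto simp: C_alg_aut_def)
  have inv_fix_k: "inv \<psi> (k c) = k c" for c
    using C_alg_aut_inv[OF aut] by (simp add: C_alg_aut_def)
  have der: "is_Cder k D" and nil: "\<And>b. \<exists>n. (D ^^ n) b = 0" using D by (auto simp: LND_def)
  note conj = conj_additive_leibniz[OF bij hom, of D]
  have "is_Cder k (inv \<psi> \<circ> D \<circ> \<psi>)"
    unfolding is_Cder_def
  proof (intro conjI allI)
    fix c x y
    show "(inv \<psi> \<circ> D \<circ> \<psi>) (x + y) = (inv \<psi> \<circ> D \<circ> \<psi>) x + (inv \<psi> \<circ> D \<circ> \<psi>) y"
      and "(inv \<psi> \<circ> D \<circ> \<psi>) (x * y) = x * (inv \<psi> \<circ> D \<circ> \<psi>) y + y * (inv \<psi> \<circ> D \<circ> \<psi>) x"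
      using der conj unfolding is_Cder_def by blast+
    have "(inv \<psi> \<circ> D \<circ> \<psi>) (k c * x) = k c * (inv \<psi> \<circ> D \<circ> \<psi>) x + x * inv \<psi> (D (k c))"
      using der conj(2) fix_k unfolding is_Cder_def by (simp add: inv_fix_k)
    then show "(inv \<psi> \<circ> D \<circ> \<psi>) (k c * x) = k c * (inv \<psi> \<circ> D \<circ> \<psi>) x"
      using is_Cder_const[OF der] rhom_0[OF rhom_inv[OF bij hom]] by simp
  qed
  moreover have "\<exists>n. ((inv \<psi> \<circ> D \<circ> \<psi>) ^^ n) b = 0" for b
  proof -
    obtain n where "(D ^^ n) (\<psi> b) = 0" using nil by blast
    then show ?thesis
      using funpow_conj[OF bij] rhom_0[OF rhom_inv[OF bij hom]] by (metis comp_apply)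
  qed
  ultimately show ?thesis by (simp add: LND_def)
qed

lemma C_alg_aut_makar_limanov:
  assumes aut: "C_alg_aut k \<psi>" and x: "x \<in> makar_limanov k"
  shows "\<psi> x \<in> makar_limanov k"
  unfolding makar_limanov_def
proof (intro INT_I CollectI)
  fix D assume "D \<in> LND k"
  then have "inv \<psi> (D (\<psi> x)) = 0"
    using LND_conj[OF aut] x unfolding makar_limanov_def by fastforce
  then have "\<psi> (inv \<psi> (D (\<psi> x))) = \<psi> 0" by simp
  then show "D (\<psi> x) = 0"
    using aut by (simp add: C_alg_aut_def bij_is_surj surj_f_inv_f rhom_0)
qed

lemma conj_is_Rder:
  assumes "bij \<psi>" "rhom \<psi>" and preserves: "\<And>a. \<psi> (j a) \<in> range j" and E: "is_Rder j E"
  shows "is_Rder j (inv \<psi> \<circ> E \<circ> \<psi>)"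
proof -
  note conj = conj_additive_leibniz[OF assms(1,2), of E]
  have const: "(inv \<psi> \<circ> E \<circ> \<psi>) (j a) = 0" for a
    using preserves[of a] is_Rder_const[OF E] rhom_0[OF rhom_inv[OF assms(1,2)]] by auto
  show ?thesis
    using conj E const unfolding is_Rder_def by simp
qed

lemma presents_Ars_rhom: "presents_Ars r s j u v \<Longrightarrow> rhom j"
  by (simp add: presents_Ars_def)

lemma presents_Ars_relation:
  assumes pres: "presents_Ars r s j u v"
  shows "j r * u - j s * v = 1"
proof -
  have hom: "rhom j" using presents_Ars_rhom[OF pres] .
  have "constUV r * varU - constUV s * varV - (1::'a poly poly) = [: [:-1, -s:], [:r:] :]"
    by (simp add: constUV_def varU_def varV_def one_pCons)
  moreover have "eval2 j u v (constUV r * varU - constUV s * varV - 1) = 0"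
    using pres by (simp add: presents_Ars_def)
  ultimately have "eval2 j u v [: [:-1, -s:], [:r:] :] = 0" by simp
  then show ?thesis
    using rhom_0[OF hom] rhom_minus[OF hom, of 1] rhom_minus[OF hom, of s] hom
    by (simp add: eval2_def map_poly_pCons rhom_def algebra_simps)
qed

lemma poly_map_poly_in_subring:
  assumes "f 0 = 0" "\<And>a. f a \<in> S" "x \<in> S" "0 \<in> S"
    "\<And>a b. a \<in> S \<Longrightarrow> b \<in> S \<Longrightarrow> a + b \<in> S" "\<And>a b. a \<in> S \<Longrightarrow> b \<in> S \<Longrightarrow> a * b \<in> S"
  shows "poly (map_poly f p) x \<in> S"
  by (induction p) (auto simp: map_poly_pCons assms)

lemma presents_Ars_generated:
  assumes pres: "presents_Ars r s j u v"
    and S: "range j \<subseteq> S" "u \<in> S" "v \<in> S"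
    "\<And>a b. a \<in> S \<Longrightarrow> b \<in> S \<Longrightarrow> a + b \<in> S" "\<And>a b. a \<in> S \<Longrightarrow> b \<in> S \<Longrightarrow> a * b \<in> S"
  shows "x \<in> S"
proof -
  obtain f where x: "x = eval2 j u v f" using pres by (metis presents_Ars_def surjD)
  have j0: "j 0 = 0" using rhom_0[OF presents_Ars_rhom[OF pres]] .
  have S0: "0 \<in> S" using S(1) j0 by (metis rangeI subsetD)
  have jS: "j a \<in> S" for a using S(1) by blast
  have "poly (map_poly j q) v \<in> S" for q
    using poly_map_poly_in_subring[where f = j, OF j0 jS S(3) S0 S(4,5)] .
  then show ?thesis
    unfolding x eval2_def
    by (intro poly_map_poly_in_subring[where f = "\<lambda>q. poly (map_poly j q) v", OF _ _ S(2) S0 S(4,5)])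
      (simp_all add: j0)
qed

lemma Rder_Ars_eq_mult:
  assumes pres: "presents_Ars r s j u v"
    and D: "is_Rder j D" and E: "is_Rder j E" and E_u: "E u = j s" and E_v: "E v = j r"
  shows "D x = (u * D v - v * D u) * E x"
proof -
  define h where "h = u * D v - v * D u"
  have rel: "j r * u - j s * v = 1" using presents_Ars_relation[OF pres] .
  have D_diff: "D (a - b) = D a - D b" for a b
    using D unfolding is_Rder_def by (metis add_diff_cancel_right' diff_add_cancel)
  have "D (j r * u - j s * v) = 0"
    using rel leibniz_1[of D] D unfolding is_Rder_def by simp
  then have eq: "j r * D u = j s * D v"
    using D_diff D is_Rder_const[OF D] unfolding is_Rder_def by simp
  have D_u: "D u = j s * h"
  proof -
    have "D u = D u * (j r * u - j s * v)" using rel by simp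
    also have "\<dots> = u * (j r * D u) - j s * v * D u" by (simp add: algebra_simps)
    also have "\<dots> = j s * h" unfolding eq h_def by (simp add: algebra_simps)
    finally show ?thesis .
  qed
  have D_v: "D v = j r * h"
  proof -
    have "D v = D v * (j r * u - j s * v)" using rel by simp
    also have "\<dots> = j r * u * D v - v * (j s * D v)" by (simp add: algebra_simps)
    also have "\<dots> = j r * h" unfolding eq[symmetric] h_def by (simp add: algebra_simps)
    finally show ?thesis .
  qed
  have "x \<in> {x. D x = h * E x}"
  proof (rule presents_Ars_generated[OF pres])
    show "range j \<subseteq> {x. D x = h * E x}"
      using is_Rder_const[OF D] is_Rder_const[OF E] by auto
    show "u \<in> {x. D x = h * E x}" "v \<in> {x. D x = h * E x}"
      by (simp_all add: D_u D_v E_u E_v mult.commute)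
    fix a b assume "a \<in> {x. D x = h * E x}" "b \<in> {x. D x = h * E x}"
    then show "a + b \<in> {x. D x = h * E x}" "a * b \<in> {x. D x = h * E x}"
      using D E unfolding is_Rder_def by (simp_all add: algebra_simps)
  qed
  then show ?thesis by (simp add: h_def)
qed

lemma aut_conj_Ars_eq_mult:
  assumes pres: "presents_Ars r s j u v"
    and ml: "makar_limanov k = range j" and aut: "C_alg_aut k \<psi>"
    and E: "is_Rder j E" and E_u: "E u = j s" and E_v: "E v = j r"
  shows "\<exists>h. \<forall>x. inv \<psi> (E (\<psi> x)) = h * E x"
proof -
  have bij: "bij \<psi>" and hom: "rhom \<psi>" using aut by (auto simp: C_alg_aut_def)
  have "\<psi> (j a) \<in> range j" for a
    using C_alg_aut_makar_limanov[OF aut, of "j a"] ml by simp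
  then have D: "is_Rder j (inv \<psi> \<circ> E \<circ> \<psi>)" using conj_is_Rder[OF bij hom _ E] by blast
  have "inv \<psi> (E (\<psi> x)) = (u * inv \<psi> (E (\<psi> v)) - v * inv \<psi> (E (\<psi> u))) * E x" for x
    using Rder_Ars_eq_mult[OF pres D E E_u E_v, of x] by simp
  then show ?thesis by blast
qed

lemma conj_factor_unit:
  fixes \<phi> :: "'b::idom \<Rightarrow> 'b"
  assumes "bij \<phi>" "rhom \<phi>" and "E x\<^sub>0 \<noteq> 0"
    and h: "\<And>x. inv \<phi> (E (\<phi> x)) = h * E x" and h': "\<And>x. \<phi> (E (inv \<phi> x)) = h' * E x"
  shows "h dvd 1"
proof -
  have f_inv: "\<phi> (inv \<phi> y) = y" for y using assms(1) by (simp add: bij_is_surj surj_f_inv_f)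
  have "E x\<^sub>0 = \<phi> (inv \<phi> (E (\<phi> (inv \<phi> x\<^sub>0))))" by (simp add: f_inv)
  also have "\<dots> = \<phi> h * h' * E x\<^sub>0" using assms(2) by (simp add: h h' rhom_def)
  finally have "\<phi> h * h' = 1" using \<open>E x\<^sub>0 \<noteq> 0\<close> by (simp add: mult_cancel_right1)
  then have "inv \<phi> (\<phi> h) dvd 1"
    using rhom_unit[OF rhom_inv[OF assms(1,2)]] by (metis dvdI)
  then show ?thesis using assms(1) by (simp add: bij_is_inj)
qed

theorem mainTheorem5:
  fixes iota :: "complex \<Rightarrow> 'a::idom"
    and r s :: 'a
    and j :: "'a \<Rightarrow> 'b::idom"
    and u v :: 'b
    and E :: "'b \<Rightarrow> 'b"
  assumes C_alg: "rhom iota"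
    and noeth: "noetherian TYPE('a)"
    and ufd_R: "ufd TYPE('a)"
    and height: "ideal_height (ideal_of {r, s}) = 2"
    and coprime: "\<forall>d. d dvd r \<and> d dvd s \<longrightarrow> (d dvd 1)"
    and pres: "presents_Ars r s j u v"
    and ufd_A: "ufd TYPE('b)"
    and units: "{x::'b. (x dvd 1)} = j ` {a. (a dvd 1)}"
    and rigid_R: "rigid iota"
    and ml_A: "makar_limanov (j \<circ> iota) = range j"
    and E_der: "is_Rder j E"
    and E_u: "E u = j s"
    and E_v: "E v = j r"
  shows "\<forall>\<phi>. C_alg_aut (j \<circ> iota) \<phi> \<longrightarrow>
           (\<exists>l. (l dvd 1) \<and> inv \<phi> \<circ> E \<circ> \<phi> = (\<lambda>x. j l * E x))"
proof (intro allI impI)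
  fix \<phi> assume aut: "C_alg_aut (j \<circ> iota) \<phi>"
  have bij: "bij \<phi>" and hom: "rhom \<phi>" using aut by (auto simp: C_alg_aut_def)
  note conj_mult = aut_conj_Ars_eq_mult[OF pres ml_A _ E_der E_u E_v]
  obtain h where h: "\<And>x. inv \<phi> (E (\<phi> x)) = h * E x" using conj_mult[OF aut] by blast
  obtain h' where h': "\<And>x. \<phi> (E (inv \<phi> x)) = h' * E x"
    using conj_mult[OF C_alg_aut_inv[OF aut]] by (auto simp: inv_inv_eq[OF bij])
  have "E u \<noteq> 0 \<or> E v \<noteq> 0"
    using presents_Ars_relation[OF pres] E_u E_v by auto
  then obtain x\<^sub>0 where "E x\<^sub>0 \<noteq> 0" by blast
  then have "h dvd 1" by (rule conj_factor_unit[OF bij hom _ h h'])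
  then have "h \<in> j ` {a. a dvd 1}" using units by blast
  then obtain l where "l dvd 1" "h = j l" by blast
  then show "\<exists>l. l dvd 1 \<and> inv \<phi> \<circ> E \<circ> \<phi> = (\<lambda>x. j l * E x)"
    using h by (intro exI[of _ l]) auto
qed

end
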